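(* The groups $\left\{\begin{bmatrix}a&b\\0&1\end{bmatrix}: a,b\in\mathbb{R},\ a\neq0\right\}$ (i.e. $\mathbb{R}^*\ltimes\mathbb{R}$) and $\left\{\begin{bmatrix}a&b\\0&1\end{bmatrix}: a,b\in\mathbb{R},\ a>0\right\}$ (i.e. $\mathbb{R}\ltimes\mathbb{R}$), with their usual Lie group structures, have the topological $R_\infty$-property.
   Context: For an automorphism $\varphi$ of a group $G$, the $\varphi$-twisted conjugacy classes are the equivalence classes of the relation $x\sim_\varphi y$ iff $y=gx\varphi(g)^{-1}$ for some $g\in G$; $R(\varphi)\in\mathbb{N}\cup\{\infty\}$ is their number. A topological group $G$ has the topological $R_\infty$-property if $R(\varphi)=\infty$ for every automorphism $\varphi$ of $G$ that is a homeomorphism (for a Lie group: every continuous automorphism). *)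

theory Defs
  imports "HOL-Analysis.Analysis" "HOL-Algebra.Group"
begin

definition twisted_rel :: "('a, 'b) monoid_scheme \<Rightarrow> ('a \<Rightarrow> 'a) \<Rightarrow> ('a \<times> 'a) set" where
  "twisted_rel G \<phi> = {(x, y). x \<in> carrier G \<and> y \<in> carrier G \<and>
     (\<exists>g \<in> carrier G. y = g \<otimes>\<^bsub>G\<^esub> x \<otimes>\<^bsub>G\<^esub> inv\<^bsub>G\<^esub> (\<phi> g))}"

definition top_R_infty :: "('a, 'b) monoid_scheme \<Rightarrow> 'a topology \<Rightarrow> bool" where
  "top_R_infty G T \<longleftrightarrow>
     (\<forall>\<phi>. \<phi> \<in> iso G G \<and> homeomorphic_map T T \<phi> \<longrightarrow>
        infinite (carrier G // twisted_rel G \<phi>))"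

text \<open>Affine group: the pair (a,b) stands for the matrix [[a,b],[0,1]];
  matrix multiplication gives (a,b)(c,d) = (a c, a d + b).\<close>
definition aff_group :: "(real \<times> real) set \<Rightarrow> (real \<times> real) monoid" where
  "aff_group S = \<lparr>carrier = S,
     mult = (\<lambda>(a, b) (c, d). (a * c, a * d + b)),
     one = (1, 0)\<rparr>"

end

theory Submission
  imports Defs
begin

(* Let A be an infinite subgroup of the multiplicative group of the reals and phi a continuous
   automorphism of A \<ltimes> R. Composing phi with the projection to the abelian group A kills all
   commutators, and since A contains some c \<noteq> 1 every translation (1, d) is one. So phi maps the
   translation subgroup to itself additively, hence (being continuous) by b \<mapsto> \<lambda> b with \<lambda> \<noteq> 0;
   conjugating (1, 1) by (a, b) then shows that phi preserves the first coordinate. Twisted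
   conjugation preserves it as well, so the classes of the elements (a, 0), a \<in> A, are distinct. *)

lemma continuous_additive_real_eq_mult:
  fixes f :: "real \<Rightarrow> real"
  assumes add: "\<And>x y. f (x + y) = f x + f y" and cont: "continuous_on UNIV f"
  shows "f x = x * f 1"
proof -
  have f_nat: "f (of_nat n * y) = of_nat n * f y" for n y
    by (induction n) (use add[of 0 0] in \<open>auto simp: distrib_right add\<close>)
  have f_uminus: "f (- y) = - f y" for y
    using add[of y "- y"] add[of 0 0] by simp
  have f_int: "f (of_int m * y) = of_int m * f y" for m y
    by (cases m rule: int_cases2) (use f_nat f_uminus in \<open>simp_all flip: minus_mult_left\<close>)
  have f_rat: "f q = q * f 1" if "q \<in> \<rat>" for q
  proof -
    obtain m n where n: "n > 0" and q: "q = of_int m / of_int n"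
      using \<open>q \<in> \<rat>\<close> by (rule Rats_cases')
    have "of_int n * f q = f (of_int n * q)"
      by (rule f_int[symmetric])
    also have "of_int n * q = of_int m * 1"
      using n q by simp
    also have "f (of_int m * 1) = of_int m * f 1"
      by (rule f_int)
    also have "\<dots> = of_int n * (q * f 1)"
      using n q by simp
    finally show ?thesis
      using n by simp
  qed
  have "closed {x. f x = x * f 1}"
    by (intro closed_Collect_eq cont continuous_intros)
  then have "closure \<rat> \<subseteq> {x. f x = x * f 1}"
    using f_rat by (intro closure_minimal) blast+
  then show ?thesis
    unfolding Rats_closure_real by blast
qed

lemma twisted_rel_refl:
  assumes "group G" and "\<phi> \<in> hom G G" and "x \<in> carrier G"
  shows "(x, x) \<in> twisted_rel G \<phi>"
proof -
  interpret group_hom G G \<phi>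
    using assms(1,2) by (simp add: group_hom_def group_hom_axioms_def)
  have "x = \<one>\<^bsub>G\<^esub> \<otimes>\<^bsub>G\<^esub> x \<otimes>\<^bsub>G\<^esub> inv\<^bsub>G\<^esub> (\<phi> \<one>\<^bsub>G\<^esub>)"
    using assms(3) by simp
  then show ?thesis
    using assms(3) unfolding twisted_rel_def by blast
qed

lemma infinite_quotient_if_invariant:
  assumes refl: "\<And>x. x \<in> X \<Longrightarrow> (x, x) \<in> R"
    and invariant: "\<And>x y. (x, y) \<in> R \<Longrightarrow> f x = f y"
    and "infinite (f ` X)"
  shows "infinite (X // R)"
proof
  assume "finite (X // R)"
  moreover have "f ` X \<subseteq> (\<lambda>C. the_elem (f ` C)) ` (X // R)"
  proof
    fix y assume "y \<in> f ` X"
    then obtain x where x: "x \<in> X" and y: "y = f x"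
      by blast
    have "f ` (R `` {x}) \<subseteq> {y}"
      using invariant y by auto
    moreover have "y \<in> f ` (R `` {x})"
      using refl[OF x] y by auto
    ultimately have "f ` (R `` {x}) = {y}"
      by blast
    then have "y = the_elem (f ` (R `` {x}))"
      by simp
    moreover have "R `` {x} \<in> X // R"
      using x by (rule quotientI)
    ultimately show "y \<in> (\<lambda>C. the_elem (f ` C)) ` (X // R)"
      by (rule image_eqI)
  qed
  ultimately show False
    using \<open>infinite (f ` X)\<close> finite_surj by blast
qed

lemma aff_group_carrier [simp]: "carrier (aff_group S) = S"
  by (simp add: aff_group_def)

lemma aff_group_mult [simp]: "x \<otimes>\<^bsub>aff_group S\<^esub> y = (fst x * fst y, fst x * snd y + snd x)"
  by (simp add: aff_group_def split_def)

lemma aff_group_one [simp]: "\<one>\<^bsub>aff_group S\<^esub> = (1, 0)"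
  by (simp add: aff_group_def)

locale real_mult_subgroup =
  fixes A :: "real set"
  assumes one_mem: "1 \<in> A"
    and mult_mem: "a \<in> A \<Longrightarrow> b \<in> A \<Longrightarrow> a * b \<in> A"
    and inverse_mem: "a \<in> A \<Longrightarrow> inverse a \<in> A"
    and nonzero: "a \<in> A \<Longrightarrow> a \<noteq> 0"
begin

abbreviation Aff :: "(real \<times> real) monoid" where
  "Aff \<equiv> aff_group (A \<times> UNIV)"

lemma inv_Aff_mult: "a \<in> A \<Longrightarrow> (inverse a, - b / a) \<otimes>\<^bsub>Aff\<^esub> (a, b) = \<one>\<^bsub>Aff\<^esub>"
  by (simp add: nonzero divide_inverse)

lemma group_Aff: "group Aff"
proof (rule groupI)
  fix x y assume "x \<in> carrier Aff" and "y \<in> carrier Aff"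
  then show "x \<otimes>\<^bsub>Aff\<^esub> y \<in> carrier Aff"
    by (simp add: mem_Times_iff mult_mem)
next
  fix x assume "x \<in> carrier Aff"
  then obtain a b where x: "x = (a, b)" and a: "a \<in> A"
    by (cases x) simp
  show "\<exists>y \<in> carrier Aff. y \<otimes>\<^bsub>Aff\<^esub> x = \<one>\<^bsub>Aff\<^esub>"
  proof
    show "(inverse a, - b / a) \<otimes>\<^bsub>Aff\<^esub> x = \<one>\<^bsub>Aff\<^esub>"
      unfolding x using a by (rule inv_Aff_mult)
    show "(inverse a, - b / a) \<in> carrier Aff"
      using a by (simp add: inverse_mem)
  qed
qed (simp_all add: one_mem algebra_simps)

lemma inv_Aff: "a \<in> A \<Longrightarrow> inv\<^bsub>Aff\<^esub> (a, b) = (inverse a, - b / a)"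
  by (rule group.inv_equality[OF group_Aff inv_Aff_mult]) (simp_all add: inverse_mem)

lemma hom_Aff_fst_mult:
  assumes "\<phi> \<in> hom Aff Aff" and "x \<in> A \<times> UNIV" and "y \<in> A \<times> UNIV"
  shows "fst (\<phi> (x \<otimes>\<^bsub>Aff\<^esub> y)) = fst (\<phi> x) * fst (\<phi> y)"
  using hom_mult[of \<phi> Aff Aff x y] assms by simp

lemma hom_Aff_fst_nonzero:
  assumes "\<phi> \<in> hom Aff Aff" and "x \<in> A \<times> UNIV"
  shows "fst (\<phi> x) \<noteq> 0"
proof -
  have "\<phi> x \<in> A \<times> UNIV"
    using hom_in_carrier[OF assms(1)] assms(2) by simp
  then show ?thesis
    by (simp add: mem_Times_iff nonzero)
qed

lemma hom_Aff_fst_translation_eq_1: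
  assumes hom: "\<phi> \<in> hom Aff Aff" and c: "c \<in> A" "c \<noteq> 1"
  shows "fst (\<phi> (1, b)) = 1"
proof -
  define h where "h x = fst (\<phi> x)" for x
  have h_mult: "h (x \<otimes>\<^bsub>Aff\<^esub> y) = h x * h y" if "x \<in> A \<times> UNIV" "y \<in> A \<times> UNIV" for x y
    unfolding h_def using hom that by (rule hom_Aff_fst_mult)
  have h_nonzero: "h x \<noteq> 0" if "x \<in> A \<times> UNIV" for x
    unfolding h_def using hom that by (rule hom_Aff_fst_nonzero)
  have h_dilate: "h (1, c * d) = h (1, d)" for d
  proof -
    have "h (c, 0) * h (1, d) = h ((c, 0) \<otimes>\<^bsub>Aff\<^esub> (1, d))"
      using c(1) one_mem by (simp only: h_mult mem_Times_iff fst_conv snd_conv UNIV_I simp_thms)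
    also have "(c, 0) \<otimes>\<^bsub>Aff\<^esub> (1, d) = (1, c * d) \<otimes>\<^bsub>Aff\<^esub> (c, 0)"
      by simp
    also have "h \<dots> = h (1, c * d) * h (c, 0)"
      using c(1) one_mem by (simp only: h_mult mem_Times_iff fst_conv snd_conv UNIV_I simp_thms)
    finally show ?thesis
      using h_nonzero[of "(c, 0)"] c(1) by simp
  qed
  have "h (1, (c - 1) * d) = 1" for d
  proof -
    \<comment> \<open>\<open>(1, (c - 1) * d)\<close> is the commutator of \<open>(c, 0)\<close> and \<open>(1, d)\<close>\<close>
    have "h (1, d) * h (1, (c - 1) * d) = h ((1, d) \<otimes>\<^bsub>Aff\<^esub> (1, (c - 1) * d))"
      using one_mem by (simp only: h_mult mem_Times_iff fst_conv snd_conv UNIV_I simp_thms)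
    also have "(1, d) \<otimes>\<^bsub>Aff\<^esub> (1, (c - 1) * d) = (1, c * d)"
      by (simp add: algebra_simps)
    finally have "h (1, d) * h (1, (c - 1) * d) = h (1, d)"
      by (simp only: h_dilate)
    then show ?thesis
      using h_nonzero[of "(1, d)"] one_mem by simp
  qed
  from this[of "b / (c - 1)"] show ?thesis
    using c(2) by (simp add: h_def)
qed

lemma continuous_iso_Aff_fst:
  assumes iso: "\<phi> \<in> iso Aff Aff"
    and cont: "continuous_map (top_of_set (A \<times> UNIV)) (top_of_set (A \<times> UNIV)) \<phi>"
    and c: "c \<in> A" "c \<noteq> 1" and x: "x \<in> A \<times> UNIV"
  shows "fst (\<phi> x) = fst x"
proof -
  have hom: "\<phi> \<in> hom Aff Aff"
    using iso by (simp add: iso_def)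
  have \<phi>_mult: "\<phi> (y \<otimes>\<^bsub>Aff\<^esub> z) = \<phi> y \<otimes>\<^bsub>Aff\<^esub> \<phi> z" if "y \<in> A \<times> UNIV" "z \<in> A \<times> UNIV" for y z
    using hom_mult[OF hom] that by simp
  define f where "f b = snd (\<phi> (1, b))" for b
  have \<phi>_translation: "\<phi> (1, b) = (1, f b)" for b
    using hom_Aff_fst_translation_eq_1[OF hom c] by (simp add: f_def prod_eq_iff)
  have "f (b + b') = f b + f b'" for b b'
  proof -
    have "(1, f (b + b')) = \<phi> ((1, b) \<otimes>\<^bsub>Aff\<^esub> (1, b'))"
      by (simp add: \<phi>_translation add.commute)
    also have "\<dots> = \<phi> (1, b) \<otimes>\<^bsub>Aff\<^esub> \<phi> (1, b')"
      by (rule \<phi>_mult) (simp_all add: one_mem)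
    also have "\<dots> = (1, f b' + f b)"
      by (simp add: \<phi>_translation)
    finally show ?thesis
      by simp
  qed
  moreover have "continuous_on UNIV f"
  proof -
    have "continuous_on (A \<times> UNIV) \<phi>"
      using cont by simp
    then have "continuous_on UNIV (\<phi> \<circ> Pair 1)"
      by (rule continuous_on_compose[OF continuous_on_Pair[OF continuous_on_const continuous_on_id]
            continuous_on_subset]) (auto simp: one_mem)
    then show ?thesis
      unfolding f_def o_def by (intro continuous_intros)
  qed
  ultimately have f_linear: "f b = b * f 1" for b
    by (rule continuous_additive_real_eq_mult)
  have "f 1 \<noteq> 0"
  proof
    assume "f 1 = 0"
    then have "\<phi> (1, 1) = \<phi> (1, 0)"
      using f_linear[of 0] by (simp add: \<phi>_translation)
    moreover have "inj_on \<phi> (A \<times> UNIV)"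
      using iso by (simp add: iso_def bij_betw_def)
    ultimately show False
      using one_mem by (auto dest: inj_onD)
  qed
  obtain a b where ab: "x = (a, b)" and a: "a \<in> A"
    using x by (cases x) simp
  have "\<phi> (a, b) \<otimes>\<^bsub>Aff\<^esub> \<phi> (1, 1) = \<phi> ((a, b) \<otimes>\<^bsub>Aff\<^esub> (1, 1))"
    by (rule \<phi>_mult[symmetric]) (simp_all add: a one_mem)
  also have "(a, b) \<otimes>\<^bsub>Aff\<^esub> (1, 1) = (1, a) \<otimes>\<^bsub>Aff\<^esub> (a, b)"
    by simp
  also have "\<phi> \<dots> = \<phi> (1, a) \<otimes>\<^bsub>Aff\<^esub> \<phi> (a, b)"
    by (rule \<phi>_mult) (simp_all add: a one_mem)
  finally have "fst (\<phi> (a, b)) * f 1 = a * f 1"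
    by (simp add: \<phi>_translation f_linear[of a])
  then show ?thesis
    using \<open>f 1 \<noteq> 0\<close> ab by simp
qed

lemma twisted_rel_Aff_fst_eq:
  assumes fst_\<phi>: "\<And>x. x \<in> A \<times> UNIV \<Longrightarrow> fst (\<phi> x) = fst x"
    and xy: "(x, y) \<in> twisted_rel Aff \<phi>"
  shows "fst y = fst x"
proof -
  obtain g where g: "g \<in> A \<times> UNIV" and y: "y = g \<otimes>\<^bsub>Aff\<^esub> x \<otimes>\<^bsub>Aff\<^esub> inv\<^bsub>Aff\<^esub> (\<phi> g)"
    using xy unfolding twisted_rel_def aff_group_carrier by blast
  obtain b where \<phi>g: "\<phi> g = (fst g, b)"
    using fst_\<phi>[OF g] by (metis prod.collapse)
  have "fst g \<in> A"
    using g by (simp add: mem_Times_iff)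
  then have "inv\<^bsub>Aff\<^esub> (\<phi> g) = (inverse (fst g), - b / fst g)"
    unfolding \<phi>g by (rule inv_Aff)
  then show ?thesis
    using y nonzero[OF \<open>fst g \<in> A\<close>] by simp
qed

theorem top_R_infty_Aff:
  assumes "infinite A"
  shows "top_R_infty Aff (top_of_set (A \<times> UNIV))"
  unfolding top_R_infty_def
proof (intro allI impI, elim conjE)
  fix \<phi> assume iso: "\<phi> \<in> iso Aff Aff"
    and homeo: "homeomorphic_map (top_of_set (A \<times> UNIV)) (top_of_set (A \<times> UNIV)) \<phi>"
  obtain c where c: "c \<in> A" "c \<noteq> 1"
    using assms finite_subset[of A "{1}"] by blast
  have hom: "\<phi> \<in> hom Aff Aff"
    using iso by (simp add: iso_def)
  note fst_\<phi> = continuous_iso_Aff_fst[OF iso homeomorphic_imp_continuous_map[OF homeo] c]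
  show "infinite (carrier Aff // twisted_rel Aff \<phi>)"
  proof (rule infinite_quotient_if_invariant)
    show "(x, x) \<in> twisted_rel Aff \<phi>" if "x \<in> carrier Aff" for x
      using group_Aff hom that by (rule twisted_rel_refl)
    show "fst x = fst y" if "(x, y) \<in> twisted_rel Aff \<phi>" for x y
      using twisted_rel_Aff_fst_eq[OF fst_\<phi> that] by simp
    show "infinite (fst ` carrier Aff)"
      using assms by simp
  qed
qed

end

lemma real_mult_subgroup_nonzero: "real_mult_subgroup {a. a \<noteq> 0}"
  by unfold_locales auto

lemma real_mult_subgroup_positive: "real_mult_subgroup {a. a > 0}"
  by unfold_locales auto

theorem corollary5p2:
  shows "top_R_infty (aff_group {(a, b). a \<noteq> 0}) (top_of_set {(a, b). a \<noteq> 0})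
       \<and> top_R_infty (aff_group {(a, b). a > 0}) (top_of_set {(a, b). a > 0})"
proof
  have positive_infinite: "infinite {a :: real. a > 0}"
    using infinite_Ioi[of "0 :: real"] by (simp add: greaterThan_def)
  then have "infinite {a :: real. a \<noteq> 0}"
    by (rule infinite_super[rotated]) auto
  moreover have "{(a, b). a \<noteq> 0} = {a :: real. a \<noteq> 0} \<times> (UNIV :: real set)"
    by auto
  ultimately show "top_R_infty (aff_group {(a, b). a \<noteq> 0}) (top_of_set {(a, b). a \<noteq> 0})"
    using real_mult_subgroup.top_R_infty_Aff[OF real_mult_subgroup_nonzero] by simp
  have "{(a, b). a > 0} = {a :: real. a > 0} \<times> (UNIV :: real set)"
    by auto
  then show "top_R_infty (aff_group {(a, b). a > 0}) (top_of_set {(a, b). a > (0 :: real)})"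
    using real_mult_subgroup.top_R_infty_Aff[OF real_mult_subgroup_positive] positive_infinite by simp
qed

end
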